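(* Let $R$ be a commutative ring with unity and let $G=\{(a,b,c):a,b,c\in R\}$ with operation $(a,b,c)\cdot(a',b',c')=(a+a',b+b',c+c'+ab')$. Then $G$ is a group of nilpotence class at most two with $[(a,b,c),(a',b',c')]=(0,0,ab'-a'b)$, and for each $x\in R$ the map $\psi_x(a,b,c)=(xa,xb,x^2c)$ is an endomorphism of $G$. Setting $g\circ_x h=g\cdot\psi_x(g)\cdot h\cdot\psi_x(g)^{-1}$, one has, for $g=(a,b,c)$, $h=(a',b',c')$, $g\circ_x h=g\cdot h\cdot(0,0,x(ab'-a'b))$; the family $(\circ_x:x\in R)$ is a brace block on $G$, and its operations are pairwise distinct, so the brace block has cardinality $|R|$. Moreover, if $R$ is a topological ring and $(r_n)$ is a sequence in $R$ converging to $0$, then $\lim_{n\to\infty}g\circ_{r_n}h=g\cdot h$ for all $g,h\in G$ (in the product topology on $G=R^3$).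
   Context: Commutator convention: $[x,y]=xyx^{-1}y^{-1}$. A skew brace is a triple $(G,\cdot,\circ)$ where $(G,\cdot)$ and $(G,\circ)$ are groups and $g\circ(h\cdot k)=(g\circ h)\cdot g^{-1}\cdot(g\circ k)$ for all $g,h,k$. A bi-skew brace is a triple $(G,\cdot,\circ)$ such that both $(G,\cdot,\circ)$ and $(G,\circ,\cdot)$ are skew braces. A brace block on a set $G$ is a family of group operations on $G$ any two of which form a bi-skew brace. *)

theory Defs
  imports Complex_Main "HOL-Algebra.Group"
begin

definition commutator :: "('g, 'm) monoid_scheme \<Rightarrow> 'g \<Rightarrow> 'g \<Rightarrow> 'g" where
  "commutator G x y = x \<otimes>\<^bsub>G\<^esub> y \<otimes>\<^bsub>G\<^esub> inv\<^bsub>G\<^esub> x \<otimes>\<^bsub>G\<^esub> inv\<^bsub>G\<^esub> y"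

definition nilpotent_class_le2 :: "('g, 'm) monoid_scheme \<Rightarrow> bool" where
  "nilpotent_class_le2 G \<longleftrightarrow> group G \<and>
     (\<forall>x\<in>carrier G. \<forall>y\<in>carrier G. \<forall>z\<in>carrier G.
        commutator G (commutator G x y) z = \<one>\<^bsub>G\<^esub>)"

definition skew_brace :: "'g monoid \<Rightarrow> 'g monoid \<Rightarrow> bool" where
  "skew_brace G H \<longleftrightarrow> group G \<and> group H \<and> carrier G = carrier H \<and>
     (\<forall>g\<in>carrier G. \<forall>h\<in>carrier G. \<forall>k\<in>carrier G.
        g \<otimes>\<^bsub>H\<^esub> (h \<otimes>\<^bsub>G\<^esub> k)
          = (g \<otimes>\<^bsub>H\<^esub> h) \<otimes>\<^bsub>G\<^esub> inv\<^bsub>G\<^esub> g \<otimes>\<^bsub>G\<^esub> (g \<otimes>\<^bsub>H\<^esub> k))"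

definition bi_skew_brace :: "'g monoid \<Rightarrow> 'g monoid \<Rightarrow> bool" where
  "bi_skew_brace G H \<longleftrightarrow> skew_brace G H \<and> skew_brace H G"

definition brace_block :: "'g set \<Rightarrow> 'i set \<Rightarrow> ('i \<Rightarrow> 'g monoid) \<Rightarrow> bool" where
  "brace_block S I F \<longleftrightarrow> (\<forall>i\<in>I. group (F i) \<and> carrier (F i) = S) \<and>
     (\<forall>i\<in>I. \<forall>j\<in>I. bi_skew_brace (F i) (F j))"

fun heis_mult :: "'a::comm_ring_1 \<times> 'a \<times> 'a \<Rightarrow> 'a \<times> 'a \<times> 'a \<Rightarrow> 'a \<times> 'a \<times> 'a" where
  "heis_mult (a, b, c) (a', b', c') = (a + a', b + b', c + c' + a * b')"

definition heis :: "('a::comm_ring_1 \<times> 'a \<times> 'a) monoid" where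
  "heis = \<lparr>carrier = UNIV, mult = heis_mult, one = (0, 0, 0)\<rparr>"

fun psi :: "'a::comm_ring_1 \<Rightarrow> 'a \<times> 'a \<times> 'a \<Rightarrow> 'a \<times> 'a \<times> 'a" where
  "psi x (a, b, c) = (x * a, x * b, x^2 * c)"

definition circ_op :: "'a::comm_ring_1 \<Rightarrow> 'a \<times> 'a \<times> 'a \<Rightarrow> 'a \<times> 'a \<times> 'a \<Rightarrow> 'a \<times> 'a \<times> 'a" where
  "circ_op x g h = g \<otimes>\<^bsub>heis\<^esub> psi x g \<otimes>\<^bsub>heis\<^esub> h \<otimes>\<^bsub>heis\<^esub> inv\<^bsub>heis\<^esub> (psi x g)"

definition circ_struct :: "'a::comm_ring_1 \<Rightarrow> ('a \<times> 'a \<times> 'a) monoid" where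
  "circ_struct x = \<lparr>carrier = UNIV, mult = circ_op x, one = (0, 0, 0)\<rparr>"

end

theory Submission
  imports Defs
begin

text \<open>
  All operations \<open>\<circ>\<^sub>x\<close> are Heisenberg-type products on \<open>R\<^sup>3\<close> whose cocycle is
  \<open>a b' + x (a b' - a' b)\<close>, and \<open>heis\<close> itself is the case \<open>x = 0\<close>. Since the
  correction term is central and bilinear, the group axioms, the skew brace
  identity for any two parameters and the commutator formula all reduce to
  polynomial identities in \<open>R\<close>. Comparing \<open>(1,0,0) \<circ>\<^sub>x (0,1,0)\<close> recovers \<open>x\<close>, and the
  limit statement is continuity of the third coordinate in \<open>x\<close>.
\<close>

fun twisted_mult :: "'a::comm_ring_1 \<Rightarrow> 'a \<times> 'a \<times> 'a \<Rightarrow> 'a \<times> 'a \<times> 'a \<Rightarrow> 'a \<times> 'a \<times> 'a" where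
  "twisted_mult x (a, b, c) (a', b', c') =
     (a + a', b + b', c + c' + a * b' + x * (a * b' - a' * b))"

definition twisted_heis :: "'a::comm_ring_1 \<Rightarrow> ('a \<times> 'a \<times> 'a) monoid" where
  "twisted_heis x = \<lparr>carrier = UNIV, mult = twisted_mult x, one = (0, 0, 0)\<rparr>"

lemma twisted_heis_simps [simp]:
  "carrier (twisted_heis x) = UNIV"
  "mult (twisted_heis x) = twisted_mult x"
  "one (twisted_heis x) = (0, 0, 0)"
  by (simp_all add: twisted_heis_def)

lemma group_twisted_heis: "group (twisted_heis x)"
proof (rule groupI)
  fix g h k :: "'a \<times> 'a \<times> 'a"
  show "g \<otimes>\<^bsub>twisted_heis x\<^esub> h \<otimes>\<^bsub>twisted_heis x\<^esub> k =
        g \<otimes>\<^bsub>twisted_heis x\<^esub> (h \<otimes>\<^bsub>twisted_heis x\<^esub> k)"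
    by (cases g; cases h; cases k) (simp add: algebra_simps)
next
  fix g :: "'a \<times> 'a \<times> 'a"
  obtain a b c where "g = (a, b, c)" by (cases g)
  then have "(- a, - b, a * b - c) \<otimes>\<^bsub>twisted_heis x\<^esub> g = \<one>\<^bsub>twisted_heis x\<^esub>"
    by (simp add: algebra_simps)
  then show "\<exists>y\<in>carrier (twisted_heis x). y \<otimes>\<^bsub>twisted_heis x\<^esub> g = \<one>\<^bsub>twisted_heis x\<^esub>"
    by (intro bexI) simp_all
qed auto

lemma inv_twisted_heis: "inv\<^bsub>twisted_heis x\<^esub> (a, b, c) = (- a, - b, a * b - c)"
  by (rule group.inv_equality[OF group_twisted_heis]) (simp_all add: algebra_simps)

lemma heis_eq_twisted_heis: "heis = twisted_heis 0"
proof -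
  have "heis_mult = twisted_mult (0 :: 'a)"
    by (intro ext) (auto split: prod.splits)
  then show ?thesis
    by (simp add: heis_def twisted_heis_def)
qed

lemma group_heis: "group heis"
  by (simp add: heis_eq_twisted_heis group_twisted_heis)

lemma heis_mult_eq: "(a, b, c) \<otimes>\<^bsub>heis\<^esub> (a', b', c') = (a + a', b + b', c + c' + a * b')"
  by (simp add: heis_def)

lemma inv_heis: "inv\<^bsub>heis\<^esub> (a, b, c) = (- a, - b, a * b - c)"
  by (simp add: heis_eq_twisted_heis inv_twisted_heis)

lemma commutator_heis:
  "commutator heis (a, b, c) (a', b', c') = (0, 0, a * b' - a' * b)"
  by (simp add: commutator_def heis_mult_eq inv_heis algebra_simps)

lemma nilpotent_class_le2_heis: "nilpotent_class_le2 heis"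
  unfolding nilpotent_class_le2_def
proof (intro conjI group_heis ballI)
  fix g h k :: "'a \<times> 'a \<times> 'a"
  show "commutator heis (commutator heis g h) k = \<one>\<^bsub>heis\<^esub>"
    by (cases g; cases h; cases k) (simp add: commutator_heis, simp add: heis_def)
qed

lemma psi_hom_heis: "psi x \<in> hom heis heis"
proof (rule homI)
  fix g h :: "'a \<times> 'a \<times> 'a"
  show "psi x (g \<otimes>\<^bsub>heis\<^esub> h) = psi x g \<otimes>\<^bsub>heis\<^esub> psi x h"
    by (cases g; cases h) (simp add: heis_mult_eq power2_eq_square algebra_simps)
qed (simp add: heis_def)

lemma circ_op_eq_twisted_mult: "circ_op x g h = twisted_mult x g h"
  by (cases g; cases h)
    (simp add: circ_op_def heis_mult_eq inv_heis power2_eq_square algebra_simps)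

lemma circ_op_eq_heis_mult:
  "circ_op x (a, b, c) (a', b', c')
     = (a, b, c) \<otimes>\<^bsub>heis\<^esub> (a', b', c') \<otimes>\<^bsub>heis\<^esub> (0, 0, x * (a * b' - a' * b))"
  by (simp add: circ_op_eq_twisted_mult heis_mult_eq)

lemma circ_struct_eq_twisted_heis: "circ_struct x = twisted_heis x"
  using circ_op_eq_twisted_mult[of x]
  by (simp add: circ_struct_def twisted_heis_def fun_eq_iff)

lemma skew_brace_twisted_heis: "skew_brace (twisted_heis x) (twisted_heis y)"
  unfolding skew_brace_def
proof (intro conjI group_twisted_heis ballI)
  fix g h k :: "'a \<times> 'a \<times> 'a"
  show "g \<otimes>\<^bsub>twisted_heis y\<^esub> (h \<otimes>\<^bsub>twisted_heis x\<^esub> k) =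
        (g \<otimes>\<^bsub>twisted_heis y\<^esub> h) \<otimes>\<^bsub>twisted_heis x\<^esub> inv\<^bsub>twisted_heis x\<^esub> g
          \<otimes>\<^bsub>twisted_heis x\<^esub> (g \<otimes>\<^bsub>twisted_heis y\<^esub> k)"
    by (cases g; cases h; cases k) (simp add: inv_twisted_heis algebra_simps)
qed simp

lemma brace_block_circ_struct: "brace_block UNIV UNIV circ_struct"
  by (simp add: brace_block_def bi_skew_brace_def circ_struct_eq_twisted_heis
      group_twisted_heis skew_brace_twisted_heis)

lemma inj_circ_op: "inj circ_op"
proof (rule injI)
  fix x y :: 'a
  assume "circ_op x = circ_op y"
  then have "circ_op x (1, 0, 0) (0, 1, 0) = circ_op y (1, 0, 0) (0, 1, 0)"
    by simp
  then show "x = y"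
    by (simp add: circ_op_eq_twisted_mult)
qed

lemma circ_op_tendsto_heis_mult:
  fixes r :: "nat \<Rightarrow> 'b::{comm_ring_1, topological_group_add, topological_semigroup_mult}"
  assumes "r \<longlonglongrightarrow> 0"
  shows "(\<lambda>n. circ_op (r n) g h) \<longlonglongrightarrow> g \<otimes>\<^bsub>heis\<^esub> h"
proof -
  obtain a b c a' b' c' where gh: "g = (a, b, c)" "h = (a', b', c')"
    by (cases g; cases h)
  have "(\<lambda>n. c + c' + a * b' + r n * (a * b' - a' * b))
          \<longlonglongrightarrow> c + c' + a * b' + 0 * (a * b' - a' * b)"
    by (intro tendsto_intros assms)
  then have "(\<lambda>n. (a + a', b + b', c + c' + a * b' + r n * (a * b' - a' * b)))
               \<longlonglongrightarrow> (a + a', b + b', c + c' + a * b')"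
    by (intro tendsto_Pair tendsto_const) simp_all
  then show ?thesis
    by (simp add: gh circ_op_eq_twisted_mult heis_mult_eq)
qed

theorem mainTheorem10:
  fixes dummyR :: "'a::comm_ring_1 itself"
    and r :: "nat \<Rightarrow> 'b::{comm_ring_1, topological_group_add, topological_semigroup_mult}"
  shows "group (heis :: ('a \<times> 'a \<times> 'a) monoid)
    \<and> nilpotent_class_le2 (heis :: ('a \<times> 'a \<times> 'a) monoid)
    \<and> (\<forall>a b c a' b' c' :: 'a.
          commutator heis (a, b, c) (a', b', c') = (0, 0, a * b' - a' * b))
    \<and> (\<forall>x :: 'a. psi x \<in> hom heis heis)
    \<and> (\<forall>(x :: 'a) a b c a' b' c'.
          circ_op x (a, b, c) (a', b', c')
            = (a, b, c) \<otimes>\<^bsub>heis\<^esub> (a', b', c') \<otimes>\<^bsub>heis\<^esub> (0, 0, x * (a * b' - a' * b)))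
    \<and> brace_block (UNIV :: ('a \<times> 'a \<times> 'a) set) UNIV circ_struct
    \<and> inj (circ_op :: 'a \<Rightarrow> _)
    \<and> (r \<longlonglongrightarrow> 0 \<longrightarrow>
         (\<forall>g h :: 'b \<times> 'b \<times> 'b.
            (\<lambda>n. circ_op (r n) g h) \<longlonglongrightarrow> g \<otimes>\<^bsub>heis\<^esub> h))"
  by (simp add: group_heis nilpotent_class_le2_heis commutator_heis psi_hom_heis
      circ_op_eq_heis_mult brace_block_circ_struct inj_circ_op circ_op_tendsto_heis_mult)

end
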